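(* Let $[0,1]=\bigsqcup_{i=1}^K I_i$ be a partition into intervals with rational Lebesgue measures $\mu(I_i)>0$. Let $N$ be the least common multiple of the denominators of the $\mu(I_i)$, $k\ge1$ and $N_k=kN\ge2$. Let $X$ be a set of $N_k$ sampled points with $m(I_i)=N_k\mu(I_i)$ points in each $I_i$, $m$ the counting measure on $X$. Let $W$ be a one-level hierarchical graphon with inter-community value $p$, and define $(Lf)(x)=\sum_{y\in X}W(x,y)(f(y)-f(x))$ for $f:X\to\mathbb R$, $x\in X$. Then every $f\in\mathcal V_{\mathrm{root}}$ satisfies $Lf=-p\,m(X)\,f$.
   Context: A one-level hierarchical graphon (relative to the partition $[0,1]=\bigsqcup_i I_i$) is a function $W:[0,1]^2\to[0,1]$ such that for each $i$, $W(x,y)=W_i(x,y)$ for $x,y\in I_i$, where $W_i$ is an arbitrary continuous symmetric function, and $W(x,y)=p$ (a fixed constant, the inter-community connection probability, denoted $w(h([0,1]))$ in the paper) whenever $x\in I_i$, $y\in I_j$, $i\ne j$. $\mathcal V_{\mathrm{root}}$ is the space of functions $\psi:X\to\mathbb R$ that are constant on each $X\cap I_i$, say equal to $a_i$, with $\sum_i m(I_i)a_i=0$. *)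

theory Defs
  imports "HOL-Analysis.Analysis"
begin

text \<open>Denominator (in lowest terms) of a rational real number.\<close>
definition rat_denom :: "real \<Rightarrow> int" where
  "rat_denom r = snd (quotient_of (inv of_rat r))"

definition interval_partition :: "nat \<Rightarrow> (nat \<Rightarrow> real set) \<Rightarrow> bool" where
  "interval_partition K I \<longleftrightarrow>
     (\<forall>i<K. is_interval (I i) \<and> I i \<noteq> {}) \<and>
     (\<forall>i<K. \<forall>j<K. i \<noteq> j \<longrightarrow> I i \<inter> I j = {}) \<and>
     (\<Union>i<K. I i) = {0..1}"

definition one_level_hgraphon ::
  "nat \<Rightarrow> (nat \<Rightarrow> real set) \<Rightarrow> real \<Rightarrow> (real \<Rightarrow> real \<Rightarrow> real) \<Rightarrow> bool" where
  "one_level_hgraphon K I p W \<longleftrightarrow>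
     (\<forall>x\<in>{0..1}. \<forall>y\<in>{0..1}. 0 \<le> W x y \<and> W x y \<le> 1) \<and>
     (\<forall>i<K. \<exists>Wi :: real \<Rightarrow> real \<Rightarrow> real.
        continuous_on (I i \<times> I i) (\<lambda>(x, y). Wi x y) \<and>
        (\<forall>x y. Wi x y = Wi y x) \<and>
        (\<forall>x\<in>I i. \<forall>y\<in>I i. W x y = Wi x y)) \<and>
     (\<forall>i<K. \<forall>j<K. i \<noteq> j \<longrightarrow> (\<forall>x\<in>I i. \<forall>y\<in>I j. W x y = p))"

definition sample_laplacian ::
  "(real \<Rightarrow> real \<Rightarrow> real) \<Rightarrow> real set \<Rightarrow> (real \<Rightarrow> real) \<Rightarrow> real \<Rightarrow> real" where
  "sample_laplacian W X f x = (\<Sum>y\<in>X. W x y * (f y - f x))"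

text \<open>V_root: functions on X constant (= a i) on each X \<inter> I i with sum_i m(I i) a i = 0,
  m the counting measure on X.  Values off X are irrelevant.\<close>
definition V_root :: "nat \<Rightarrow> (nat \<Rightarrow> real set) \<Rightarrow> real set \<Rightarrow> (real \<Rightarrow> real) set" where
  "V_root K I X = {\<psi>. \<exists>a :: nat \<Rightarrow> real.
      (\<forall>i<K. \<forall>x\<in>X \<inter> I i. \<psi> x = a i) \<and>
      (\<Sum>i<K. real (card (X \<inter> I i)) * a i) = 0}"

end

theory Submission
  imports Defs
begin

text \<open>For \<open>x\<close> in the block \<open>I i\<close>, \<open>f\<close> is constant on \<open>X \<inter> I i\<close>, so the terms of
  \<open>(L f)(x)\<close> with \<open>y\<close> in the own block vanish, while all other terms carry the weight \<open>p\<close>.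
  Hence \<open>(L f)(x) = p (\<Sum>y\<in>X. f y) - p m(X) f(x)\<close>, and the first sum is
  \<open>\<Sum>\<^sub>i m(I i) a\<^sub>i = 0\<close>.\<close>

lemma sample_laplacian_block_constant:
  assumes "finite X"
    and "\<And>y. y \<in> X \<inter> B \<Longrightarrow> f y = f x"
    and "\<And>y. y \<in> X - B \<Longrightarrow> W x y = p"
  shows "sample_laplacian W X f x = p * (\<Sum>y\<in>X. f y) - p * real (card X) * f x"
proof -
  have "sample_laplacian W X f x = (\<Sum>y\<in>X. p * (f y - f x))"
    unfolding sample_laplacian_def
    by (rule sum.cong) (use assms(2,3) in \<open>auto simp: Diff_iff\<close>)
  also have "\<dots> = p * (\<Sum>y\<in>X. f y) - p * real (card X) * f x"
    by (simp add: sum_distrib_left[symmetric] sum_subtractf right_diff_distrib)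
  finally show ?thesis .
qed

lemma interval_partition_block:
  assumes "interval_partition K I" "x \<in> {0..1}"
  obtains i where "i < K" "x \<in> I i"
  using assms unfolding interval_partition_def by blast

lemma one_level_hgraphon_off_block:
  assumes "interval_partition K I" "one_level_hgraphon K I p W"
    and "i < K" "x \<in> I i" "y \<in> {0..1} - I i"
  shows "W x y = p"
proof -
  obtain j where "j < K" "y \<in> I j"
    using interval_partition_block[OF assms(1)] assms(5) by blast
  with assms show ?thesis
    unfolding one_level_hgraphon_def by (metis DiffE)
qed

lemma V_root_sum_eq_0:
  assumes "interval_partition K I" "finite X" "X \<subseteq> {0..1}" "f \<in> V_root K I X"
  shows "(\<Sum>y\<in>X. f y) = 0"
proof -
  obtain a where a: "\<And>i y. i < K \<Longrightarrow> y \<in> X \<inter> I i \<Longrightarrow> f y = a i"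
    and balanced: "(\<Sum>i<K. real (card (X \<inter> I i)) * a i) = 0"
    using assms(4) unfolding V_root_def by blast
  have blocks: "X = (\<Union>i<K. X \<inter> I i)" and disjoint: "\<forall>i<K. \<forall>j<K. i \<noteq> j \<longrightarrow> I i \<inter> I j = {}"
    using assms(1,3) unfolding interval_partition_def by auto
  have "(\<Sum>y\<in>X. f y) = (\<Sum>i<K. \<Sum>y\<in>X \<inter> I i. f y)"
    by (subst blocks, rule sum.UNION_disjoint) (use assms(2) disjoint in auto)
  also have "\<dots> = (\<Sum>i<K. real (card (X \<inter> I i)) * a i)"
    by (rule sum.cong) (simp_all add: a)
  finally show ?thesis using balanced by simp
qed

theorem proposition7p2:
  fixes K :: nat and I :: "nat \<Rightarrow> real set" and k N Nk :: nat
    and X :: "real set" and W :: "real \<Rightarrow> real \<Rightarrow> real" and p :: real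
    and f :: "real \<Rightarrow> real"
  assumes part: "interval_partition K I"
    and meas: "\<forall>i<K. I i \<in> sets lborel \<and> measure lborel (I i) \<in> \<rat> \<and> measure lborel (I i) > 0"
    and N_def: "N = nat (Lcm {rat_denom (measure lborel (I i)) | i. i < K})"
    and k: "k \<ge> 1"
    and Nk_def: "Nk = k * N" and Nk2: "Nk \<ge> 2"
    and X: "finite X" "X \<subseteq> {0..1}" "card X = Nk"
    and Xcount: "\<forall>i<K. real (card (X \<inter> I i)) = real Nk * measure lborel (I i)"
    and W: "one_level_hgraphon K I p W"
    and f: "f \<in> V_root K I X"
  shows "\<forall>x\<in>X. sample_laplacian W X f x = - p * real (card X) * f x"
proof
  fix x assume "x \<in> X"
  then obtain i where i: "i < K" "x \<in> I i"
    using interval_partition_block[OF part] X(2) by blast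
  obtain a where a: "\<And>j y. j < K \<Longrightarrow> y \<in> X \<inter> I j \<Longrightarrow> f y = a j"
    using f unfolding V_root_def by blast
  have "sample_laplacian W X f x = p * (\<Sum>y\<in>X. f y) - p * real (card X) * f x"
  proof (rule sample_laplacian_block_constant[where B = "I i"])
    show "\<And>y. y \<in> X \<inter> I i \<Longrightarrow> f y = f x"
      using a i \<open>x \<in> X\<close> by simp
    show "\<And>y. y \<in> X - I i \<Longrightarrow> W x y = p"
      using one_level_hgraphon_off_block[OF part W i] X(2) by blast
  qed (rule X(1))
  then show "sample_laplacian W X f x = - p * real (card X) * f x"
    using V_root_sum_eq_0[OF part X(1,2) f] by simp
qed

end
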